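(* Let $M'=M[D,K]$ be a compatible minor of the weighted uncertainty matroid $\mathcal{M}$. Let $e$ be a non-trivial element of $M'$ such that (i) $e\in B$ for some minimum-weight basis $B$ of $M'$, (ii) $w_e=U_e$, (iii) $e$ has minimum weight in $E(M')\setminus\mathrm{span}_{M'}(B\setminus\{e\})$, and (iv) $e$ has maximum query cost in $(E(M')\setminus\mathrm{span}_{M'}(B\setminus\{e\}))\cap E^U_{w_e}$. Then $M[D,K\cup\{e\}]$ is a compatible minor of $\mathcal{M}$.
   Context: A weighted uncertainty matroid $\mathcal{M}=(E,\mathcal{I},A,w)$ consists of a matroid $M=(E,\mathcal{I})$ on a finite set $E$, for each $e\in E$ a non-empty finite union $A_e$ of bounded real intervals (each open or closed), a weight $w_e\in A_e$, and a query cost $c_e\ge0$. $L_e=\inf A_e$, $U_e=\sup A_e$; $e$ is trivial if $A_e=\{w_e\}$. For a real $x$, $E^U_x=\{e\in E: U_e=x \text{ and } e \text{ non-trivial}\}$. A minimum-weight basis (MWB) is a basis minimizing total weight. A weight assignment is $w^*$ with $w^*_e\in A_e$, consistent with $Q$ if $w^*_e=w_e$ on $Q$. $Q$ verifies an MWB $B$ if for every weight assignment consistent with $Q$, $B$ is an MWB with respect to it; a certificate for $\mathcal{M}$ is a set verifying some MWB, and $c^*$ denotes the minimum cost $\sum_{e\in Q}c_e$ of a certificate for $\mathcal{M}$. For $D,K\subseteq E$, $M[D,K]$ is the matroid obtained from $M$ by deleting $D$ and contracting $K$, ground set $E(M[D,K])=E\setminus(D\cup K)$, weights restricted. $M[D,K]$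 is a compatible minor if there is a set $Q$ of cost $c^*$ verifying an MWB $B$ of $\mathcal{M}$ with $K\subseteq B$, $D\cap B=\emptyset$. $\mathrm{span}_N(X)=\{e: r_N(X\cup\{e\})=r_N(X)\}$. *)

theory Defs
  imports Complex_Main
begin

definition matroid :: "'a set \<Rightarrow> 'a set set \<Rightarrow> bool" where
  "matroid E I \<longleftrightarrow>
     finite E \<and> I \<subseteq> Pow E \<and> {} \<in> I \<and>
     (\<forall>X Y. Y \<in> I \<and> X \<subseteq> Y \<longrightarrow> X \<in> I) \<and>
     (\<forall>X Y. X \<in> I \<and> Y \<in> I \<and> card X < card Y \<longrightarrow> (\<exists>y \<in> Y - X. insert y X \<in> I))"

definition basis :: "'a set \<Rightarrow> 'a set set \<Rightarrow> 'a set \<Rightarrow> bool" where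
  "basis E I B \<longleftrightarrow> B \<in> I \<and> (\<forall>X \<in> I. B \<subseteq> X \<longrightarrow> X = B)"

definition rank :: "'a set set \<Rightarrow> 'a set \<Rightarrow> nat" where
  "rank I X = Max {card Y | Y. Y \<subseteq> X \<and> Y \<in> I}"

definition matroid_span :: "'a set \<Rightarrow> 'a set set \<Rightarrow> 'a set \<Rightarrow> 'a set" where
  "matroid_span E I X = {e \<in> E. rank I (insert e X) = rank I X}"

text \<open>The minor M[D,K]: delete D, contract K. Ground set and independent sets.\<close>
definition minor_ground :: "'a set \<Rightarrow> 'a set \<Rightarrow> 'a set \<Rightarrow> 'a set" where
  "minor_ground E D K = E - (D \<union> K)"

definition minor_indep :: "'a set \<Rightarrow> 'a set set \<Rightarrow> 'a set \<Rightarrow> 'a set \<Rightarrow> 'a set set" where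
  "minor_indep E I D K =
     {X. X \<subseteq> E - (D \<union> K) \<and> rank I (X \<union> K) = card X + rank I K}"

definition is_MWB :: "'a set \<Rightarrow> 'a set set \<Rightarrow> ('a \<Rightarrow> real) \<Rightarrow> 'a set \<Rightarrow> bool" where
  "is_MWB E I w B \<longleftrightarrow> basis E I B \<and>
     (\<forall>B'. basis E I B' \<longrightarrow> sum w B \<le> sum w B')"

definition uncertainty_area :: "real set \<Rightarrow> bool" where
  "uncertainty_area S \<longleftrightarrow> S \<noteq> {} \<and>
     (\<exists>F. finite F \<and> S = \<Union>F \<and>
          (\<forall>J \<in> F. \<exists>a b. J = {a..b} \<or> J = {a<..<b}))"

definition weighted_uncertainty_matroid ::
  "'a set \<Rightarrow> 'a set set \<Rightarrow> ('a \<Rightarrow> real set) \<Rightarrow> ('a \<Rightarrow> real) \<Rightarrow> ('a \<Rightarrow> real) \<Rightarrow> bool" where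
  "weighted_uncertainty_matroid E I A w c \<longleftrightarrow>
     matroid E I \<and>
     (\<forall>e \<in> E. uncertainty_area (A e) \<and> w e \<in> A e \<and> c e \<ge> 0)"

definition upper :: "('a \<Rightarrow> real set) \<Rightarrow> 'a \<Rightarrow> real" where
  "upper A e = Sup (A e)"

definition lower :: "('a \<Rightarrow> real set) \<Rightarrow> 'a \<Rightarrow> real" where
  "lower A e = Inf (A e)"

definition trivial :: "('a \<Rightarrow> real set) \<Rightarrow> ('a \<Rightarrow> real) \<Rightarrow> 'a \<Rightarrow> bool" where
  "trivial A w e \<longleftrightarrow> A e = {w e}"

definition EU :: "'a set \<Rightarrow> ('a \<Rightarrow> real set) \<Rightarrow> ('a \<Rightarrow> real) \<Rightarrow> real \<Rightarrow> 'a set" where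
  "EU E A w x = {e \<in> E. upper A e = x \<and> \<not> trivial A w e}"

definition weight_assignment :: "'a set \<Rightarrow> ('a \<Rightarrow> real set) \<Rightarrow> ('a \<Rightarrow> real) \<Rightarrow> bool" where
  "weight_assignment E A w' \<longleftrightarrow> (\<forall>e \<in> E. w' e \<in> A e)"

definition consistent :: "('a \<Rightarrow> real) \<Rightarrow> 'a set \<Rightarrow> ('a \<Rightarrow> real) \<Rightarrow> bool" where
  "consistent w Q w' \<longleftrightarrow> (\<forall>e \<in> Q. w' e = w e)"

definition verifies ::
  "'a set \<Rightarrow> 'a set set \<Rightarrow> ('a \<Rightarrow> real set) \<Rightarrow> ('a \<Rightarrow> real) \<Rightarrow> 'a set \<Rightarrow> 'a set \<Rightarrow> bool" where
  "verifies E I A w Q B \<longleftrightarrow>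
     (\<forall>w'. weight_assignment E A w' \<and> consistent w Q w' \<longrightarrow> is_MWB E I w' B)"

definition certificate ::
  "'a set \<Rightarrow> 'a set set \<Rightarrow> ('a \<Rightarrow> real set) \<Rightarrow> ('a \<Rightarrow> real) \<Rightarrow> 'a set \<Rightarrow> bool" where
  "certificate E I A w Q \<longleftrightarrow> Q \<subseteq> E \<and> (\<exists>B. verifies E I A w Q B)"

definition opt_cost ::
  "'a set \<Rightarrow> 'a set set \<Rightarrow> ('a \<Rightarrow> real set) \<Rightarrow> ('a \<Rightarrow> real) \<Rightarrow> ('a \<Rightarrow> real) \<Rightarrow> real" where
  "opt_cost E I A w c = Min {sum c Q | Q. certificate E I A w Q}"

definition compatible_minor ::
  "'a set \<Rightarrow> 'a set set \<Rightarrow> ('a \<Rightarrow> real set) \<Rightarrow> ('a \<Rightarrow> real) \<Rightarrow> ('a \<Rightarrow> real)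
     \<Rightarrow> 'a set \<Rightarrow> 'a set \<Rightarrow> bool" where
  "compatible_minor E I A w c D K \<longleftrightarrow> D \<subseteq> E \<and> K \<subseteq> E \<and>
     (\<exists>Q B. Q \<subseteq> E \<and> sum c Q = opt_cost E I A w c \<and> verifies E I A w Q B \<and>
            is_MWB E I w B \<and> K \<subseteq> B \<and> D \<inter> B = {})"

end

theory Submission
  imports Defs
begin

text \<open>Take an optimal certificate Qs verifying an MWB Bs compatible with D and K, and assume
  e \<notin> Bs. Since B \<union> K is independent in M, a symmetric exchange with Bs gives f \<in> Bs
  such that Bs - f + e is a basis and f lies outside the span of B - {e} in the minor. Then
  w e \<le> w f by (iii) and w f \<le> w e by minimality of Bs, so both bases weigh the same.
  As e is non-trivial and sits at its upper end, Qs must query e, for otherwise lowering e would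
  make Bs - f + e lighter. If f is queried or trivial, Qs also verifies Bs - f + e. Otherwise
  raising f shows U f = w e, so c f \<le> c e by (iv), and Qs - e + f is a certificate for
  Bs - f + e of no larger cost.\<close>

section \<open>Rank and span in matroids\<close>

lemma indep_finite: "matroid E I \<Longrightarrow> X \<in> I \<Longrightarrow> finite X"
  unfolding matroid_def by (meson PowD finite_subset subsetD)

lemma indep_subset_ground: "matroid E I \<Longrightarrow> X \<in> I \<Longrightarrow> X \<subseteq> E"
  unfolding matroid_def by blast

lemma indep_subset: "matroid E I \<Longrightarrow> Y \<in> I \<Longrightarrow> X \<subseteq> Y \<Longrightarrow> X \<in> I"
  unfolding matroid_def by blast

lemma indep_augment:
  "matroid E I \<Longrightarrow> X \<in> I \<Longrightarrow> Y \<in> I \<Longrightarrow> card X < card Y \<Longrightarrow> \<exists>y\<in>Y - X. insert y X \<in> I"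
  unfolding matroid_def by blast

lemma rank_indep:
  assumes "finite X" "X \<in> I"
  shows "rank I X = card X"
proof -
  have "finite {card Y | Y. Y \<subseteq> X \<and> Y \<in> I}"
    by (rule finite_subset[of _ "{..card X}"]) (auto intro: card_mono assms)
  then show ?thesis
    unfolding rank_def using assms by (intro Max_eqI) (auto intro: card_mono)
qed

lemma
  assumes "matroid E I"
  shows rank_attained: "\<exists>Y\<subseteq>X. Y \<in> I \<and> card Y = rank I X"
    and card_le_rank: "Y \<subseteq> X \<Longrightarrow> Y \<in> I \<Longrightarrow> card Y \<le> rank I X"
proof -
  let ?S = "{card Y | Y. Y \<subseteq> X \<and> Y \<in> I}"
  have "finite E" "I \<subseteq> Pow E" "{} \<in> I"
    using assms unfolding matroid_def by auto
  then have fin: "finite ?S" and ne: "?S \<noteq> {}"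
    by (auto intro!: finite_subset[of _ "{..card E}"] card_mono)
  show "\<exists>Y\<subseteq>X. Y \<in> I \<and> card Y = rank I X"
    using Max_in[OF fin ne] unfolding rank_def by auto
  show "Y \<subseteq> X \<Longrightarrow> Y \<in> I \<Longrightarrow> card Y \<le> rank I X"
    unfolding rank_def using fin by (auto intro: Max_ge)
qed

lemma rank_mono: "matroid E I \<Longrightarrow> X \<subseteq> Y \<Longrightarrow> rank I X \<le> rank I Y"
  by (metis order_trans rank_attained card_le_rank)

lemma rank_insert_le:
  assumes m: "matroid E I"
  shows "rank I (insert x X) \<le> rank I X + 1"
proof -
  obtain Y where Y: "Y \<subseteq> insert x X" "Y \<in> I" "card Y = rank I (insert x X)"
    using rank_attained[OF m] by blast
  have "card (Y - {x}) \<le> rank I X"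
    using Y by (intro card_le_rank[OF m]) (auto intro: indep_subset[OF m])
  moreover have "card Y \<le> card (Y - {x}) + 1"
    using indep_finite[OF m Y(2)] by (cases "x \<in> Y") (auto simp: card_Suc_Diff1)
  ultimately show ?thesis using Y by linarith
qed

lemma indep_if_rank_eq_card:
  assumes "matroid E I" "finite X" "rank I X = card X"
  shows "X \<in> I"
  using rank_attained[OF assms(1), of X] assms(2,3) card_subset_eq by metis

lemma indep_extend_to_rank:
  assumes m: "matroid E I" and "J \<in> I" "J \<subseteq> S"
  shows "\<exists>J'. J \<subseteq> J' \<and> J' \<subseteq> S \<and> J' \<in> I \<and> card J' = rank I S"
  using assms(2,3)
proof (induction "rank I S - card J" arbitrary: J rule: less_induct)
  case less
  obtain Y where Y: "Y \<subseteq> S" "Y \<in> I" "card Y = rank I S"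
    using rank_attained[OF m] by blast
  have le: "card J \<le> rank I S" using card_le_rank[OF m] less.prems by blast
  show ?case
  proof (cases "card J = rank I S")
    case True
    then show ?thesis using less.prems by blast
  next
    case False
    then have "card J < card Y" using le Y(3) by simp
    then obtain y where y: "y \<in> Y - J" "insert y J \<in> I"
      using indep_augment[OF m less.prems(1) Y(2)] by blast
    have "card (insert y J) = card J + 1"
      using y indep_finite[OF m less.prems(1)] by simp
    then have "rank I S - card (insert y J) < rank I S - card J" using False le by simp
    moreover have "insert y J \<subseteq> S" using y Y less.prems by auto
    ultimately obtain J' where "insert y J \<subseteq> J'" "J' \<subseteq> S" "J' \<in> I" "card J' = rank I S"
      using less.hyps[OF _ y(2)] by meson
    then show ?thesis by blast
  qed
qed

lemma rank_submodular:
  assumes m: "matroid E I"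
  shows "rank I (X \<union> Y) + rank I (X \<inter> Y) \<le> rank I X + rank I Y"
proof -
  obtain J where J: "J \<subseteq> X \<inter> Y" "J \<in> I" "card J = rank I (X \<inter> Y)"
    using rank_attained[OF m] by blast
  obtain J' where J': "J \<subseteq> J'" "J' \<subseteq> X \<union> Y" "J' \<in> I" "card J' = rank I (X \<union> Y)"
    using indep_extend_to_rank[OF m J(2), of "X \<union> Y"] J(1) by blast
  have fin: "finite J'" using indep_finite[OF m J'(3)] .
  have "card (J' \<inter> X) \<le> rank I X" "card (J' \<inter> Y) \<le> rank I Y"
    using card_le_rank[OF m] indep_subset[OF m J'(3)] by (meson inf_le1 inf_le2)+
  moreover have "card (J' \<inter> X) + card (J' \<inter> Y) = card J' + card (J' \<inter> X \<inter> Y)"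
  proof -
    have "(J' \<inter> X) \<union> (J' \<inter> Y) = J'" "(J' \<inter> X) \<inter> (J' \<inter> Y) = J' \<inter> X \<inter> Y"
      using J'(2) by auto
    then show ?thesis using card_Un_Int[of "J' \<inter> X" "J' \<inter> Y"] fin by simp
  qed
  moreover have "card J \<le> card (J' \<inter> X \<inter> Y)"
    using J(1) J'(1) fin by (intro card_mono) auto
  ultimately show ?thesis using J(3) J'(4) by linarith
qed

lemma in_span_iff:
  "x \<in> matroid_span E I X \<longleftrightarrow> x \<in> E \<and> rank I (insert x X) = rank I X"
  unfolding matroid_span_def by simp

lemma not_in_span_if_insert_indep:
  assumes "finite X" "X \<in> I" "insert x X \<in> I" "x \<notin> X"
  shows "x \<notin> matroid_span E I X"
  using assms rank_indep[OF assms(1,2)] rank_indep[of "insert x X" I]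
  unfolding in_span_iff by simp

lemma insert_indep_iff_not_in_span:
  assumes m: "matroid E I" and X: "X \<in> I" and x: "x \<in> E" "x \<notin> X"
  shows "insert x X \<in> I \<longleftrightarrow> x \<notin> matroid_span E I X"
proof
  show "insert x X \<in> I \<Longrightarrow> x \<notin> matroid_span E I X"
    using not_in_span_if_insert_indep[OF indep_finite[OF m X] X] x(2) by blast
next
  assume "x \<notin> matroid_span E I X"
  then have "rank I (insert x X) \<noteq> rank I X" using x(1) unfolding in_span_iff by simp
  moreover have "rank I X \<le> rank I (insert x X)" by (rule rank_mono[OF m]) auto
  moreover have "rank I (insert x X) \<le> rank I X + 1" by (rule rank_insert_le[OF m])
  ultimately have "rank I (insert x X) = card (insert x X)"
    using rank_indep[OF indep_finite[OF m X] X] indep_finite[OF m X] x(2) by simp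
  then show "insert x X \<in> I"
    using indep_if_rank_eq_card[OF m] indep_finite[OF m X] by simp
qed

lemma basis_span:
  assumes m: "matroid E I" and B: "basis E I B"
  shows "matroid_span E I B = E"
proof
  show "matroid_span E I B \<subseteq> E" unfolding matroid_span_def by blast
  show "E \<subseteq> matroid_span E I B"
  proof
    fix x assume x: "x \<in> E"
    show "x \<in> matroid_span E I B"
    proof (cases "x \<in> B")
      case True
      then show ?thesis using x unfolding in_span_iff by (simp add: insert_absorb)
    next
      case False
      have "insert x B \<notin> I" using B False unfolding basis_def by blast
      then show ?thesis
        using insert_indep_iff_not_in_span[OF m _ x False] B unfolding basis_def by blast
    qed
  qed
qed

lemma span_mono:
  assumes m: "matroid E I" and "X \<subseteq> Y"
  shows "matroid_span E I X \<subseteq> matroid_span E I Y"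
proof
  fix x assume "x \<in> matroid_span E I X"
  then have x: "x \<in> E" "rank I (insert x X) = rank I X" by (auto simp: in_span_iff)
  have "rank I (insert x Y) + rank I (insert x X \<inter> Y) \<le> rank I (insert x X) + rank I Y"
  proof -
    have "insert x X \<union> Y = insert x Y" using \<open>X \<subseteq> Y\<close> by blast
    then show ?thesis using rank_submodular[OF m, of "insert x X" Y] by simp
  qed
  moreover have "rank I X \<le> rank I (insert x X \<inter> Y)"
    using \<open>X \<subseteq> Y\<close> by (intro rank_mono[OF m]) auto
  moreover have "rank I Y \<le> rank I (insert x Y)" by (intro rank_mono[OF m]) auto
  ultimately show "x \<in> matroid_span E I Y" using x unfolding in_span_iff by linarith
qed

lemma rank_Un_span:
  assumes m: "matroid E I" and G: "G \<subseteq> matroid_span E I X"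
  shows "rank I (X \<union> G) = rank I X"
proof -
  have "G \<subseteq> E" using G unfolding matroid_span_def by blast
  moreover have "finite E" using m unfolding matroid_def by blast
  ultimately have "finite G" by (rule finite_subset)
  then show ?thesis using G
  proof (induction G rule: finite_induct)
    case empty
    then show ?case by simp
  next
    case (insert g G)
    then have "g \<in> matroid_span E I (X \<union> G)" using span_mono[OF m, of X "X \<union> G"] by blast
    then show ?case using insert unfolding in_span_iff by simp
  qed
qed

lemma span_Int_indep:
  assumes m: "matroid E I" and XY: "X \<union> Y \<in> I"
  shows "matroid_span E I X \<inter> matroid_span E I Y \<subseteq> matroid_span E I (X \<inter> Y)"
proof
  fix x assume "x \<in> matroid_span E I X \<inter> matroid_span E I Y"
  then have x: "x \<in> E" "rank I (insert x X) = rank I X" "rank I (insert x Y) = rank I Y"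
    by (auto simp: in_span_iff)
  have fin: "finite (X \<union> Y)" using indep_finite[OF m XY] .
  have rank_card: "rank I Z = card Z" if "Z \<subseteq> X \<union> Y" for Z
    using rank_indep[of Z I] indep_subset[OF m XY that] finite_subset[OF that fin] by simp
  have "rank I (insert x (X \<union> Y)) + rank I (insert x (X \<inter> Y)) \<le> rank I (insert x X) + rank I (insert x Y)"
    using rank_submodular[OF m, of "insert x X" "insert x Y"] by simp
  moreover have "rank I (X \<union> Y) \<le> rank I (insert x (X \<union> Y))"
    by (rule rank_mono[OF m]) blast
  moreover have "rank I (X \<inter> Y) \<le> rank I (insert x (X \<inter> Y))"
    by (rule rank_mono[OF m]) blast
  moreover have "card X + card Y = card (X \<union> Y) + card (X \<inter> Y)"
    using fin by (intro card_Un_Int) auto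
  moreover have "rank I X = card X" "rank I Y = card Y" "rank I (X \<union> Y) = card (X \<union> Y)"
    "rank I (X \<inter> Y) = card (X \<inter> Y)"
    by (rule rank_card; blast)+
  ultimately have "rank I (insert x (X \<inter> Y)) = rank I (X \<inter> Y)"
    using x(2,3) by linarith
  then show "x \<in> matroid_span E I (X \<inter> Y)" using x(1) unfolding in_span_iff by simp
qed

lemma span_Diff_indep:
  assumes m: "matroid E I" and B: "B \<in> I" and "finite G"
    and x: "x \<in> matroid_span E I B" "\<forall>g\<in>G. x \<in> matroid_span E I (B - {g})"
  shows "x \<in> matroid_span E I (B - G)"
  using \<open>finite G\<close> x(2)
proof (induction G rule: finite_induct)
  case empty
  then show ?case using x(1) by simp
next
  case (insert g G)
  have "(B - G) \<union> (B - {g}) \<in> I" by (rule indep_subset[OF m B]) blast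
  then have "x \<in> matroid_span E I ((B - G) \<inter> (B - {g}))"
    using span_Int_indep[OF m] insert by auto
  moreover have "(B - G) \<inter> (B - {g}) = B - insert g G" by blast
  ultimately show ?case by simp
qed

lemma basis_exchange_extends_indep:
  assumes m: "matroid E I" and Bs: "basis E I Bs" and e: "e \<notin> Bs" "e \<notin> P"
    and ePI: "insert e P \<in> I"
  shows "\<exists>f\<in>Bs - P. insert f P \<in> I \<and> insert e (Bs - {f}) \<in> I"
proof (rule ccontr)
  assume none: "\<not> ?thesis"
  \<comment> \<open>Then e is spanned by every Bs - {g} with g outside span P, hence by their
    intersection, which lies in span P; but insert e P is independent.\<close>
  let ?span = "matroid_span E I"
  define H where "H = Bs \<inter> ?span P"
  have BsI: "Bs \<in> I" using Bs unfolding basis_def by blast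
  have PI: "P \<in> I" by (rule indep_subset[OF m ePI]) blast
  have eE: "e \<in> E" using indep_subset_ground[OF m ePI] by blast
  have "e \<in> ?span (Bs - {g})" if g: "g \<in> Bs - H" for g
  proof -
    have gE: "g \<in> E" using g indep_subset_ground[OF m BsI] by blast
    have "g \<notin> P"
    proof
      assume "g \<in> P"
      then have "g \<in> ?span P" using gE by (simp add: in_span_iff insert_absorb)
      then show False using g unfolding H_def by blast
    qed
    then have "insert g P \<in> I"
      using insert_indep_iff_not_in_span[OF m PI gE] g unfolding H_def by blast
    then have "insert e (Bs - {g}) \<notin> I" using none g \<open>g \<notin> P\<close> by blast
    moreover have "Bs - {g} \<in> I" by (rule indep_subset[OF m BsI]) blast
    ultimately show ?thesis using insert_indep_iff_not_in_span[OF m _ eE] e(1) by blast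
  qed
  then have "e \<in> ?span (Bs - (Bs - H))"
    using span_Diff_indep[OF m BsI, of "Bs - H" e] basis_span[OF m Bs] eE indep_finite[OF m BsI]
    by blast
  moreover have "Bs - (Bs - H) \<subseteq> P \<union> H" by blast
  ultimately have "e \<in> ?span (P \<union> H)" using span_mono[OF m] by blast
  moreover have "rank I (P \<union> H) = rank I P" by (rule rank_Un_span[OF m]) (simp add: H_def)
  ultimately have "rank I (insert e (P \<union> H)) = rank I P" by (simp add: in_span_iff)
  moreover have "rank I (insert e P) \<le> rank I (insert e (P \<union> H))" by (intro rank_mono[OF m]) auto
  moreover have "rank I (insert e P) = rank I P + 1"
    using rank_indep[OF _ ePI] rank_indep[OF _ PI] indep_finite[OF m PI] e(2) by simp
  ultimately show False by simp
qed

lemma basis_of_indep_card_eq: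
  assumes m: "matroid E I" and B: "basis E I B" and X: "X \<in> I" "card X = card B"
  shows "basis E I X"
  unfolding basis_def
proof (intro conjI ballI impI)
  show "X \<in> I" by fact
  fix Y assume Y: "Y \<in> I" "X \<subseteq> Y"
  show "Y = X"
  proof (rule ccontr)
    assume "Y \<noteq> X"
    then have "X \<subset> Y" using Y(2) by blast
    then have "card B < card Y" using X(2) psubset_card_mono[OF indep_finite[OF m Y(1)]] by metis
    moreover have BI: "B \<in> I" using B unfolding basis_def by blast
    ultimately obtain y where "y \<in> Y - B" "insert y B \<in> I"
      using indep_augment[OF m BI Y(1)] by blast
    then show False using B unfolding basis_def by blast
  qed
qed

section \<open>Minors\<close>

lemma minor_indep_iff:
  assumes m: "matroid E I" and K: "K \<in> I"
  shows "X \<in> minor_indep E I D K \<longleftrightarrow> X \<subseteq> E - (D \<union> K) \<and> X \<union> K \<in> I"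
proof (cases "X \<subseteq> E - (D \<union> K)")
  case True
  have fin: "finite X" "finite K"
    using True m indep_finite[OF m K] unfolding matroid_def by (auto intro: finite_subset)
  have card: "card (X \<union> K) = card X + rank I K"
    using True fin rank_indep[OF fin(2) K] by (subst card_Un_disjoint) auto
  show ?thesis
    using True card rank_indep[of "X \<union> K" I] fin indep_if_rank_eq_card[OF m, of "X \<union> K"]
    unfolding minor_indep_def by auto
next
  case False
  then show ?thesis unfolding minor_indep_def by blast
qed

lemma minor_basis_exchange:
  assumes m: "matroid E I" and Bs: "basis E I Bs" and KB: "K \<subseteq> Bs" and DB: "D \<inter> Bs = {}"
    and B: "B \<in> minor_indep E I D K" and e: "e \<in> B" "e \<notin> Bs"
  shows "\<exists>f\<in>Bs. f \<in> minor_ground E D K - matroid_span (minor_ground E D K) (minor_indep E I D K) (B - {e})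
           \<and> basis E I (insert e (Bs - {f}))"
proof -
  have BsI: "Bs \<in> I" using Bs unfolding basis_def by blast
  have KI: "K \<in> I" using indep_subset[OF m BsI KB] .
  have BK: "B \<subseteq> E - (D \<union> K)" "B \<union> K \<in> I" using B minor_indep_iff[OF m KI] by auto
  define P where "P = (B - {e}) \<union> K"
  have "insert e P = B \<union> K" "e \<notin> P" unfolding P_def using e BK(1) by auto
  then obtain f where f: "f \<in> Bs" "f \<notin> P" "insert f P \<in> I"
    and B'I: "insert e (Bs - {f}) \<in> I"
    using basis_exchange_extends_indep[OF m Bs e(2)] BK(2) by (metis DiffE)
  have fin: "finite Bs" using indep_finite[OF m BsI] .
  have "card (insert e (Bs - {f})) = Suc (card (Bs - {f}))"
    using fin e(2) by (intro card_insert_disjoint) auto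
  also have "\<dots> = card Bs" by (rule card_Suc_Diff1[OF fin f(1)])
  finally have "basis E I (insert e (Bs - {f}))" by (rule basis_of_indep_card_eq[OF m Bs B'I])
  moreover have fG: "f \<in> minor_ground E D K"
    using f DB indep_subset_ground[OF m BsI] unfolding minor_ground_def P_def by auto
  moreover have "f \<notin> matroid_span (minor_ground E D K) (minor_indep E I D K) (B - {e})"
  proof (rule not_in_span_if_insert_indep)
    have "P \<in> I" by (rule indep_subset[OF m f(3)]) blast
    moreover have "(B - {e}) \<union> K = P" "insert f (B - {e}) \<union> K = insert f P"
      unfolding P_def by auto
    ultimately show "B - {e} \<in> minor_indep E I D K" "insert f (B - {e}) \<in> minor_indep E I D K"
      using BK(1) fG f(3) unfolding minor_indep_iff[OF m KI] minor_ground_def by auto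
    show "finite (B - {e})"
      using BK(1) m finite_subset[of "B - {e}" E] unfolding matroid_def by blast
    show "f \<notin> B - {e}" using f(2) unfolding P_def by blast
  qed
  ultimately show ?thesis using f(1) by blast
qed

section \<open>Verification under uncertainty\<close>

lemma uncertainty_area_bdd_above:
  assumes "uncertainty_area S"
  shows "bdd_above S"
proof -
  obtain F where F: "finite F" "S = \<Union>F" "\<forall>J\<in>F. \<exists>a b. J = {a..b} \<or> J = {a<..<b}"
    using assms unfolding uncertainty_area_def by blast
  have "\<forall>J\<in>F. bdd_above J" using F(3) by fastforce
  then show ?thesis using F(1,2) bdd_above_UN[of F "\<lambda>J. J"] by simp
qed

lemma weight_in_area: "weighted_uncertainty_matroid E I A w c \<Longrightarrow> e \<in> E \<Longrightarrow> w e \<in> A e"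
  unfolding weighted_uncertainty_matroid_def by blast

lemma weight_le_upper:
  assumes "weighted_uncertainty_matroid E I A w c" "e \<in> E" "x \<in> A e"
  shows "x \<le> upper A e"
proof -
  have "bdd_above (A e)"
    using assms(1,2) unfolding weighted_uncertainty_matroid_def by (auto intro: uncertainty_area_bdd_above)
  then show ?thesis unfolding upper_def using assms(3) by (rule cSup_upper[rotated])
qed

lemma verifies_is_MWB:
  assumes "weighted_uncertainty_matroid E I A w c" "verifies E I A w Q B"
  shows "is_MWB E I w B"
proof -
  have "weight_assignment E A w" "consistent w Q w"
    using weight_in_area[OF assms(1)] unfolding weight_assignment_def consistent_def by auto
  then show ?thesis using assms(2) unfolding verifies_def by blast
qed

lemma sum_exchange:
  fixes g :: "'a \<Rightarrow> 'b::comm_monoid_add"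
  assumes "finite B" "f \<in> B" "e \<notin> B"
  shows "sum g (insert e (B - {f})) + g f = sum g B + g e"
  using assms sum.remove[of B f g] by (simp add: ac_simps)

lemma verifies_exchange_le:
  assumes wum: "weighted_uncertainty_matroid E I A w c" and ver: "verifies E I A w Q Bs"
    and B': "basis E I (insert e (Bs - {f}))" and f: "f \<in> Bs" and e: "e \<notin> Bs"
    and x: "x \<in> A e" "e \<in> Q \<Longrightarrow> x = w e" and y: "y \<in> A f" "f \<in> Q \<Longrightarrow> y = w f"
  shows "y \<le> x"
proof -
  have m: "matroid E I" using wum unfolding weighted_uncertainty_matroid_def by blast
  have Bs: "basis E I Bs" using verifies_is_MWB[OF wum ver] unfolding is_MWB_def by blast
  have fin: "finite Bs" using Bs indep_finite[OF m] unfolding basis_def by blast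
  define w' where "w' = w(e := x, f := y)"
  have "weight_assignment E A w'" "consistent w Q w'"
    using x y weight_in_area[OF wum] unfolding weight_assignment_def consistent_def w'_def by auto
  then have "sum w' Bs \<le> sum w' (insert e (Bs - {f}))"
    using ver B' unfolding verifies_def is_MWB_def by blast
  moreover have "w' e = x" "w' f = y" using e f unfolding w'_def by auto
  ultimately show ?thesis using sum_exchange[OF fin f e, of w'] by simp
qed

lemma verifies_exchange:
  assumes wum: "weighted_uncertainty_matroid E I A w c" and ver: "verifies E I A w Q Bs"
    and B': "basis E I (insert e (Bs - {f}))" and f: "f \<in> Bs" and e: "e \<notin> Bs"
    and Q: "e \<in> Q" "f \<in> Q" and w: "w e = w f"
  shows "verifies E I A w Q (insert e (Bs - {f}))"
  unfolding verifies_def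
proof (intro allI impI)
  fix w' assume w': "weight_assignment E A w' \<and> consistent w Q w'"
  then have M: "is_MWB E I w' Bs" using ver unfolding verifies_def by blast
  have "finite Bs"
    using M wum indep_finite unfolding is_MWB_def basis_def weighted_uncertainty_matroid_def by blast
  moreover have "w' e = w' f" using w' Q w unfolding consistent_def by simp
  ultimately have "sum w' (insert e (Bs - {f})) = sum w' Bs" using sum_exchange[OF _ f e, of w'] by simp
  then show "is_MWB E I w' (insert e (Bs - {f}))" using M B' unfolding is_MWB_def by simp
qed

lemma verifies_mono: "verifies E I A w Q B \<Longrightarrow> Q \<subseteq> Q' \<Longrightarrow> verifies E I A w Q' B"
  unfolding verifies_def consistent_def by blast

lemma verifies_insert_trivial:
  assumes "verifies E I A w (insert f Q) B" "trivial A w f" "f \<in> E"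
  shows "verifies E I A w Q B"
  using assms unfolding verifies_def consistent_def weight_assignment_def trivial_def by auto

lemma is_MWB_decrease:
  fixes u v :: "'a \<Rightarrow> real"
  assumes m: "matroid E I" and M: "is_MWB E I v B" and e: "e \<in> B"
    and u: "u e \<le> v e" "\<And>x. x \<noteq> e \<Longrightarrow> u x = v x"
  shows "is_MWB E I u B"
proof -
  have shift: "sum u X = sum v X - (if e \<in> X then v e - u e else 0)" if "finite X" for X
  proof (cases "e \<in> X")
    case True
    have "sum u (X - {e}) = sum v (X - {e})" using u(2) by (intro sum.cong) auto
    then show ?thesis using True sum.remove[OF that True, of u] sum.remove[OF that True, of v] by simp
  next
    case False
    then have "sum u X = sum v X" by (intro sum.cong refl) (metis u(2))
    then show ?thesis using False by simp
  qed
  show ?thesis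
    unfolding is_MWB_def
  proof (intro conjI allI impI)
    show "basis E I B" using M unfolding is_MWB_def by blast
    fix X assume X: "basis E I X"
    have "finite B" "finite X" using M X indep_finite[OF m] unfolding is_MWB_def basis_def by auto
    then show "sum u B \<le> sum u X" using M X shift e u(1) unfolding is_MWB_def by fastforce
  qed
qed

text \<open>Every realisation of e is at most w e, and lowering the weight of an element of B only
  favours B.\<close>
lemma verifies_Diff_upper:
  assumes wum: "weighted_uncertainty_matroid E I A w c" and ver: "verifies E I A w Q B"
    and e: "e \<in> B" "w e = upper A e"
  shows "verifies E I A w (Q - {e}) B"
  unfolding verifies_def
proof (intro allI impI)
  have m: "matroid E I" using wum unfolding weighted_uncertainty_matroid_def by blast
  have eE: "e \<in> E"
    using verifies_is_MWB[OF wum ver] e indep_subset_ground[OF m] unfolding is_MWB_def basis_def by blast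
  fix w' assume w': "weight_assignment E A w' \<and> consistent w (Q - {e}) w'"
  then have "weight_assignment E A (w'(e := w e))" "consistent w Q (w'(e := w e))"
    using weight_in_area[OF wum] unfolding weight_assignment_def consistent_def by auto
  then have "is_MWB E I (w'(e := w e)) B" using ver unfolding verifies_def by blast
  moreover have "w' e \<le> w e"
    using w' weight_le_upper[OF wum eE] e(2) eE unfolding weight_assignment_def by simp
  ultimately show "is_MWB E I w' B" using is_MWB_decrease[OF m _ e(1)] by simp
qed

lemma exchange_certificate:
  assumes wum: "weighted_uncertainty_matroid E I A w c" and QsE: "Qs \<subseteq> E"
    and ver: "verifies E I A w Qs Bs" and f: "f \<in> Bs" and e: "e \<notin> Bs"
    and B': "basis E I (insert e (Bs - {f}))"
    and e_nontriv: "\<not> trivial A w e" and w_up: "w e = upper A e" and w_le: "w e \<le> w f"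
    and cost: "f \<in> EU E A w (w e) \<Longrightarrow> c f \<le> c e"
  shows "\<exists>Q\<subseteq>E. sum c Q \<le> sum c Qs \<and> verifies E I A w Q (insert e (Bs - {f}))"
proof -
  have m: "matroid E I" using wum unfolding weighted_uncertainty_matroid_def by blast
  have Bs: "basis E I Bs" using verifies_is_MWB[OF wum ver] unfolding is_MWB_def by blast
  have "insert e (Bs - {f}) \<subseteq> E" "Bs \<subseteq> E"
    using B' Bs indep_subset_ground[OF m] unfolding basis_def by auto
  then have eE: "e \<in> E" and fE: "f \<in> E" using f by auto
  note le = verifies_exchange_le[OF wum ver B' f e]
  have "w f \<le> w e" using le[of "w e" "w f"] weight_in_area[OF wum eE] weight_in_area[OF wum fE] by blast
  then have wfe: "w f = w e" using w_le by simp
  have eQ: "e \<in> Qs"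
  proof (rule ccontr)
    assume "e \<notin> Qs"
    obtain x where x: "x \<in> A e" "x \<noteq> w e"
      using e_nontriv weight_in_area[OF wum eE] unfolding trivial_def by blast
    then have "x < w e" using weight_le_upper[OF wum eE x(1)] w_up by simp
    moreover have "w f \<le> x" using le[of x "w f"] x(1) \<open>e \<notin> Qs\<close> weight_in_area[OF wum fE] by blast
    ultimately show False using wfe by simp
  qed
  have ver': "verifies E I A w (insert f Qs) (insert e (Bs - {f}))"
    using verifies_exchange[OF wum verifies_mono[OF ver subset_insertI] B' f e] eQ wfe by simp
  consider "f \<in> Qs" | "trivial A w f" | "f \<notin> Qs" "\<not> trivial A w f" by blast
  then show ?thesis
  proof cases
    case 1
    then have "insert f Qs = Qs" by blast
    then show ?thesis using ver' QsE by (intro exI[of _ Qs]) simp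
  next
    case 2
    then have "verifies E I A w Qs (insert e (Bs - {f}))" by (rule verifies_insert_trivial[OF ver' _ fE])
    then show ?thesis using QsE by (intro exI[of _ Qs]) simp
  next
    case 3
    have "upper A f \<le> w e"
      unfolding upper_def
    proof (rule cSup_least)
      show "A f \<noteq> {}" using weight_in_area[OF wum fE] by blast
      show "y \<le> w e" if "y \<in> A f" for y
        using le[of "w e" y] that weight_in_area[OF wum eE] 3(1) by blast
    qed
    moreover have "w f \<le> upper A f" using weight_le_upper[OF wum fE weight_in_area[OF wum fE]] .
    ultimately have "f \<in> EU E A w (w e)" using wfe fE 3(2) unfolding EU_def by auto
    then have "c f \<le> c e" by (rule cost)
    moreover have "finite Qs" using QsE m finite_subset[of Qs E] unfolding matroid_def by blast
    moreover have "insert f Qs - {e} = insert f (Qs - {e})" using f e by blast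
    ultimately have "sum c (insert f Qs - {e}) \<le> sum c Qs"
      using 3(1) sum.remove[OF \<open>finite Qs\<close> eQ, of c] by simp
    moreover have "verifies E I A w (insert f Qs - {e}) (insert e (Bs - {f}))"
      using verifies_Diff_upper[OF wum ver' _ w_up] by simp
    ultimately show ?thesis using QsE fE by (intro exI[of _ "insert f Qs - {e}"]) auto
  qed
qed

lemma opt_cost_le:
  assumes "finite E" "certificate E I A w Q"
  shows "opt_cost E I A w c \<le> sum c Q"
proof -
  have "{sum c Q | Q. certificate E I A w Q} \<subseteq> sum c ` Pow E"
    unfolding certificate_def by blast
  moreover have "finite (sum c ` Pow E)" using assms(1) by simp
  ultimately have "finite {sum c Q | Q. certificate E I A w Q}" by (rule finite_subset)
  then show ?thesis unfolding opt_cost_def using assms(2) by (auto intro: Min_le)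
qed

lemma compatible_minorI:
  assumes wum: "weighted_uncertainty_matroid E I A w c" and "D \<subseteq> E" "K \<subseteq> E"
    and Q: "Q \<subseteq> E" "sum c Q \<le> opt_cost E I A w c" "verifies E I A w Q B"
    and B: "K \<subseteq> B" "D \<inter> B = {}"
  shows "compatible_minor E I A w c D K"
proof -
  have "finite E" using wum unfolding weighted_uncertainty_matroid_def matroid_def by blast
  then have "opt_cost E I A w c \<le> sum c Q"
    using Q(1,3) by (intro opt_cost_le) (auto simp: certificate_def)
  then have "sum c Q = opt_cost E I A w c" using Q(2) by simp
  then show ?thesis
    using assms verifies_is_MWB[OF wum Q(3)] unfolding compatible_minor_def by blast
qed

theorem lemma17:
  fixes E :: "'a set" and I :: "'a set set" and A :: "'a \<Rightarrow> real set"
    and w c :: "'a \<Rightarrow> real" and D K B :: "'a set" and e :: 'a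
  assumes wum: "weighted_uncertainty_matroid E I A w c"
    and comp: "compatible_minor E I A w c D K"
    and e_in: "e \<in> minor_ground E D K"
    and e_nontriv: "\<not> trivial A w e"
    and B_mwb: "is_MWB (minor_ground E D K) (minor_indep E I D K) w B"
    and e_B: "e \<in> B"
    and w_up: "w e = upper A e"
    and min_w: "\<forall>f \<in> minor_ground E D K - matroid_span (minor_ground E D K) (minor_indep E I D K) (B - {e}).
                   w e \<le> w f"
    and max_c: "\<forall>f \<in> (minor_ground E D K - matroid_span (minor_ground E D K) (minor_indep E I D K) (B - {e}))
                        \<inter> EU E A w (w e). c f \<le> c e"
  shows "compatible_minor E I A w c D (K \<union> {e})"
proof -
  have m: "matroid E I" using wum unfolding weighted_uncertainty_matroid_def by blast
  obtain Qs Bs where DK: "D \<subseteq> E" "K \<subseteq> E" and Qs: "Qs \<subseteq> E" "sum c Qs = opt_cost E I A w c"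
    and ver: "verifies E I A w Qs Bs" and Bs: "basis E I Bs" "K \<subseteq> Bs" "D \<inter> Bs = {}"
    using comp unfolding compatible_minor_def is_MWB_def by blast
  have Ke: "K \<union> {e} \<subseteq> E" "e \<notin> D" using e_in DK unfolding minor_ground_def by auto
  show ?thesis
  proof (cases "e \<in> Bs")
    case True
    show ?thesis
      by (rule compatible_minorI[OF wum DK(1) Ke(1) Qs(1) _ ver]) (use Qs(2) Bs(2,3) True in auto)
  next
    case False
    have B: "B \<in> minor_indep E I D K" using B_mwb unfolding is_MWB_def basis_def by blast
    obtain f where f: "f \<in> Bs"
      "f \<in> minor_ground E D K - matroid_span (minor_ground E D K) (minor_indep E I D K) (B - {e})"
      and B': "basis E I (insert e (Bs - {f}))"
      using minor_basis_exchange[OF m Bs B e_B False] by blast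
    have "w e \<le> w f" "f \<in> EU E A w (w e) \<Longrightarrow> c f \<le> c e" using min_w max_c f(2) by auto
    then obtain Q where Q: "Q \<subseteq> E" "sum c Q \<le> sum c Qs" "verifies E I A w Q (insert e (Bs - {f}))"
      using exchange_certificate[OF wum Qs(1) ver f(1) False B' e_nontriv w_up] by blast
    show ?thesis
      by (rule compatible_minorI[OF wum DK(1) Ke(1) Q(1) _ Q(3)])
        (use Q(2) Qs(2) Bs(2,3) Ke(2) f False in \<open>auto simp: minor_ground_def\<close>)
  qed
qed

end
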